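(* Let $h$ be an odd positive integer, $m=3h$, $e=3^h$. For $b\in\mathrm{GF}(3^m)^*$ let $N_{(b,0)}$ be the number of $y\in\mathrm{GF}(3^m)$ satisfying simultaneously $\mathrm{Tr}(y^{e+1}+y^2)=0$ and $\mathrm{Tr}(by^{e+1})=0$. Then for every $b\in\mathrm{GF}(3^m)^*$, $N_{(b,0)}\in\{3^{m-2},\ 3^{m-2}+2\cdot3^{2(h-1)},\ 3^{m-2}-2\cdot3^{2(h-1)}\}$.
   Context: $\mathrm{Tr}$ denotes the absolute trace from $\mathrm{GF}(3^m)$ onto $\mathrm{GF}(3)$. *)

theory Defs
  imports Main
begin

text \<open>Absolute trace from GF(3^m) onto GF(3): Tr(x) = sum_{i<m} x^(3^i).
  Its values lie in the prime subfield GF(3) of the ambient field.\<close>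
definition abs_trace3 :: "nat \<Rightarrow> 'a::field \<Rightarrow> 'a" where
  "abs_trace3 m x = (\<Sum>i<m. x ^ (3 ^ i))"

end

theory Submission
  imports Defs "HOL-Number_Theory.Residues" "HOL-Computational_Algebra.Polynomial"
begin

(*
  For a in GF(3^m) and u in GF(3^h), Q(y) = Tr (a y^(e+1) + u y^2) is a quadratic form over GF(3)
  whose polar form is Tr (z L(y)) with L(y) = a y^e + a^(e^2) y^(e^2) + 2 u y.  Counting the pairs
  (y, z) with Q(y) = Q(z) expresses the sum of the squares of the three value counts n_0, n_1, n_(-1)
  through the radical ker L, a GF(3^h)-subspace of dimension j <= 2.  Together with
  n_0 + n_1 + n_(-1) = 3^m and the oddness of n_0 this becomes a norm equation
  u^2 - u v + v^2 = 3^(m + h j) in the Eisenstein integers, whose solutions force n_0 = 3^(m-1)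
  for even j and n_0 = 3^(m-1) +- 2 3^(2h-1) for j = 1.

  Every nonzero point of GF(3)^2 lies on exactly one of the four lines through the origin, so the
  zero counts of the forms with (a, u) = (b, 0), (1, 1), (1 + b, 1), (1 - b, 1) add up to
  3^m + 3 N_(b,0).  The first two forms are nondegenerate, and at most one of the last two is
  degenerate: otherwise t = b + b^e + b^(e^2), an element of GF(3^h), would satisfy t^2 = -1,
  which is impossible since 3^h = 3 (mod 4) for odd h.
*)

lemma finite_field_power_card:
  fixes x :: "'a::{field,finite}"
  shows "x ^ card (UNIV :: 'a set) = x"
proof (cases "x = 0")
  case False
  define G :: "'a monoid" where "G = \<lparr>carrier = UNIV - {0}, monoid.mult = (*), one = 1\<rparr>"
  interpret G: group G
    by (rule groupI) (auto simp: G_def mult.assoc intro!: bexI[of _ "inverse _"])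
  have pow: "x [^]\<^bsub>G\<^esub> n = x ^ n" for n :: nat
    by (induction n) (simp_all add: G_def)
  have order: "Coset.order G = card (UNIV :: 'a set) - 1"
    by (simp add: Coset.order_def G_def card_Diff_singleton)
  have "x \<in> carrier G"
    using False by (simp add: G_def)
  from G.pow_order_eq_1[OF this] have "x ^ (card (UNIV :: 'a set) - 1) = 1"
    unfolding pow order by (simp only: G_def monoid.select_convs)
  moreover have "card (UNIV :: 'a set) = Suc (card (UNIV :: 'a set) - 1)"
    using finite_UNIV_card_ge_0[where 'a = 'a] by simp
  ultimately show ?thesis
    by (metis power_Suc2 mult_1_left)
qed (simp add: finite_UNIV_card_ge_0)

lemma CHAR_eq_prime_of_card:
  assumes "prime p" and "card (UNIV :: 'a::{field,finite} set) = p ^ n"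
  shows "CHAR('a) = p"
proof -
  have "prime CHAR('a)"
    by (rule prime_CHAR_semidom) (simp add: finite_imp_CHAR_pos)
  moreover have "CHAR('a) dvd p ^ n"
    using CHAR_dvd_CARD[where 'a = 'a] assms(2) by simp
  then have "CHAR('a) dvd p"
    by (rule prime_dvd_power[OF \<open>prime CHAR('a)\<close>])
  ultimately show ?thesis
    using assms(1) by (simp add: primes_dvd_imp_eq)
qed

lemma eisenstein_norm_le_3_imp_small:
  fixes u v :: int
  assumes "u^2 - u*v + v^2 \<le> 3"
  shows "\<bar>u\<bar> \<le> 2 \<and> \<bar>v\<bar> \<le> 2"
proof -
  have square_le_4: "x^2 \<le> 4" if "(2*y-x)^2 + 3*x^2 \<le> 12" for x y :: int
    using that zero_le_power2[of "2*y-x"] by linarith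
  have "(2*u-v)^2 + 3*v^2 \<le> 12" "(2*v-u)^2 + 3*u^2 \<le> 12"
    using assms by (simp_all add: power2_eq_square algebra_simps)
  then have "u^2 \<le> 4" "v^2 \<le> 4"
    using square_le_4 by simp_all
  then show ?thesis
    using abs_le_square_iff[of u 2] abs_le_square_iff[of v 2] by simp
qed

lemma eisenstein_norm_descent:
  fixes u v :: int
  assumes "u^2 - u*v + v^2 = 3^(Suc (Suc k))"
  obtains u' v' where "u = 3*u'" "v = 3*v'" "u'^2 - u'*v' + v'^2 = 3^k"
proof -
  have "(u+v)^2 = 3^(Suc (Suc k)) + 3*(u*v)"
    using assms by (simp add: power2_eq_square algebra_simps)
  then have "3 dvd (u+v)^2"
    by simp
  then obtain w where "u+v = 3*w"
    using prime_dvd_power[of "3::int" "u+v" 2] by auto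
  then have v: "v = 3*w - u"
    by simp
  have "3*(u^2 - 3*w*u + 3*w^2) = 3 * 3^(Suc k)"
    using assms unfolding v by (simp add: power2_eq_square algebra_simps)
  then have "u^2 = 3^(Suc k) + 3*(w*u - w^2)"
    by (simp add: algebra_simps)
  then have "3 dvd u^2"
    by simp
  then obtain u' where u': "u = 3*u'"
    using prime_dvd_power[of "3::int" u 2] by auto
  moreover have "v = 3*(w - u')"
    using v u' by simp
  moreover have "u'^2 - u'*(w - u') + (w - u')^2 = 3^k"
    using assms unfolding u' v by (simp add: power2_eq_square algebra_simps)
  ultimately show ?thesis
    using that by blast
qed

text \<open>Up to units, the Eisenstein integers of norm \<open>3^k\<close> are the powers \<open>(1 - \<omega>)^k\<close>;
  only the resulting values of \<open>u + v\<close> are recorded.\<close>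

lemma eisenstein_norm_eq_power_3:
  fixes u v :: int
  assumes "u^2 - u*v + v^2 = 3^k"
  shows "u + v \<in> (if even k then {3^(k div 2), -(3^(k div 2)), 2*3^(k div 2), -2*3^(k div 2)}
                   else {0, 3^(k div 2 + 1), -(3^(k div 2 + 1))})"
  using assms
proof (induction k arbitrary: u v rule: less_induct)
  case (less k)
  show ?case
  proof (cases "k \<le> 1")
    case True
    then have "u^2 - u*v + v^2 \<le> 3"
      using less.prems by (cases k) auto
    then have "\<bar>u\<bar> \<le> 2 \<and> \<bar>v\<bar> \<le> 2"
      by (rule eisenstein_norm_le_3_imp_small)
    then have "u = -2 \<or> u = -1 \<or> u = 0 \<or> u = 1 \<or> u = 2" "v = -2 \<or> v = -1 \<or> v = 0 \<or> v = 1 \<or> v = 2"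
      by auto
    moreover have "k = 0 \<or> k = 1"
      using True by auto
    ultimately show ?thesis
      using less.prems by (elim disjE) (simp_all add: power2_eq_square)
  next
    case False
    then obtain k' where k: "k = Suc (Suc k')"
      by (cases k; cases "k - 1") auto
    obtain u' v' where "u = 3*u'" "v = 3*v'" "u'^2 - u'*v' + v'^2 = 3^k'"
      using eisenstein_norm_descent less.prems unfolding k by blast
    moreover from this(3) have "u' + v' \<in> (if even k' then {3^(k' div 2), -(3^(k' div 2)), 2*3^(k' div 2), -2*3^(k' div 2)}
                   else {0, 3^(k' div 2 + 1), -(3^(k' div 2 + 1))})"
      using less.IH[of k'] k by simp
    ultimately show ?thesis
      using k by (auto split: if_splits)
  qed
qed

lemma eisenstein_norm_of_counts:
  fixes n0 n1 n2 M k :: nat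
  assumes "n0 + n1 + n2 = 3^M" and "3*(n0^2 + n1^2 + n2^2) = 3^(2*M) + 2*3^k"
  defines "u \<equiv> int n1 - int n0" and "v \<equiv> int n2 - int n0"
  shows "u^2 - u*v + v^2 = 3^k"
proof -
  have "(3::int)^(2*M) = (int n0 + int n1 + int n2)^2"
    using arg_cong[OF assms(1), of int] by (simp add: power_mult mult.commute[of 2 M])
  then have "3*(int n0^2 + int n1^2 + int n2^2) = (int n0 + int n1 + int n2)^2 + 2*3^k"
    using arg_cong[OF assms(2), of int] by simp
  then have "2*(u^2 - u*v + v^2) = 2*3^k"
    unfolding u_def v_def by (simp add: power2_eq_square algebra_simps)
  then show ?thesis
    by simp
qed

lemma zero_count_from_square_sum:
  fixes n0 n1 n2 M k :: nat
  assumes sum: "n0 + n1 + n2 = 3^M" and squares: "3*(n0^2 + n1^2 + n2^2) = 3^(2*M) + 2*3^k"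
    and "odd n0" and "k \<ge> 2" and "M \<ge> 1"
  shows "(odd k \<longrightarrow> n0 = 3^(M-1)) \<and>
         (even k \<longrightarrow> n0 = 3^(M-1) + 2*3^(k div 2 - 1) \<or> n0 + 2*3^(k div 2 - 1) = 3^(M-1))"
proof -
  define A :: int where "A = 3^(M-1)"
  have "3^M = 3*A"
    using \<open>M \<ge> 1\<close> unfolding A_def by (simp add: power_eq_if[of _ M])
  then have uv: "(int n1 - int n0) + (int n2 - int n0) = 3*A - 3*int n0"
    using arg_cong[OF sum, of int] by simp
  note solutions = eisenstein_norm_eq_power_3[OF eisenstein_norm_of_counts[OF sum squares]]
  have "odd A" "odd (int n0)"
    using \<open>odd n0\<close> unfolding A_def by simp_all
  show ?thesis
  proof (cases "even k")
    case True
    define B :: int where "B = 3^(k div 2 - 1)"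
    have odd_B: "odd B"
      unfolding B_def by simp
    have "3^(k div 2) = 3*B"
      using \<open>k \<ge> 2\<close> unfolding B_def by (simp add: power_eq_if[of _ "k div 2"])
    then have "int n0 \<in> {A - B, A + B, A - 2*B, A + 2*B}"
      using solutions True uv by auto
    moreover have "int n0 \<noteq> A - B" "int n0 \<noteq> A + B"
      using \<open>odd A\<close> \<open>odd (int n0)\<close> odd_B by (metis even_add even_diff)+
    ultimately have "int n0 = A + 2*B \<or> int n0 + 2*B = A"
      by auto
    then have "int n0 = int (3^(M-1) + 2*3^(k div 2 - 1)) \<or> int (n0 + 2*3^(k div 2 - 1)) = int (3^(M-1))"
      unfolding A_def B_def by simp
    then show ?thesis
      using True by (simp only: of_nat_eq_iff simp_thms)
  next
    case False
    define B :: int where "B = 3^(k div 2)"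
    have odd_B: "odd B"
      unfolding B_def by simp
    have "int n0 \<in> {A, A - B, A + B}"
      using solutions False uv unfolding B_def by auto
    moreover have "int n0 \<noteq> A - B" "int n0 \<noteq> A + B"
      using \<open>odd A\<close> \<open>odd (int n0)\<close> odd_B by (metis even_add even_diff)+
    ultimately have "int n0 = A"
      by auto
    then show ?thesis
      using False unfolding A_def by simp
  qed
qed

lemma odd_card_of_neg_closed:
  fixes S :: "'a::ab_group_add set"
  assumes "finite S" "0 \<in> S" "\<And>x. x \<in> S \<Longrightarrow> -x \<in> S"
    and no_2_torsion: "\<And>x::'a. x + x = 0 \<Longrightarrow> x = 0"
  shows "odd (card S)"
  using assms(1-3)
proof (induction "card S" arbitrary: S rule: less_induct)
  case less
  show ?case
  proof (cases "S = {0}")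
    case False
    then obtain x where x: "x \<in> S" "x \<noteq> 0"
      using less.prems(2) by blast
    then have "-x \<in> S" "-x \<noteq> x"
      using less.prems(3) no_2_torsion[of x] by (auto simp: neg_eq_iff_add_eq_0)
    then have card_S: "card S = card (S - {x, -x}) + 2"
      using x less.prems(1) card_mono[OF less.prems(1), of "{x, -x}"] by (simp add: card_Diff_subset)
    have "odd (card (S - {x, -x}))"
    proof (rule less.hyps)
      show "card (S - {x, -x}) < card S" "finite (S - {x, -x})" "0 \<in> S - {x, -x}"
        using card_S less.prems(1,2) x by auto
      show "-y \<in> S - {x, -x}" if "y \<in> S - {x, -x}" for y
        using that less.prems(3) by auto
    qed
    then show ?thesis
      using card_S by simp
  qed simp
qed

lemma card_fibre_additive:
  fixes f :: "'a::ab_group_add \<Rightarrow> 'b::ab_group_add"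
  assumes add: "\<And>x y. f (x + y) = f x + f y"
  shows "card {y. f y = f y0} = card {y. f y = 0}"
proof -
  have f_diff: "f (x - y) = f x - f y" for x y
    using add[of "x - y" y] by (simp add: eq_diff_eq)
  have "{y. f y = f y0} = (\<lambda>y. y + y0) ` {y. f y = 0}"
  proof (rule Set.set_eqI)
    fix y
    have "y \<in> (\<lambda>y. y + y0) ` {y. f y = 0} \<longleftrightarrow> f (y - y0) = 0"
      by (auto intro: image_eqI[of _ _ "y - y0"] simp: f_diff add)
    then show "y \<in> {y. f y = f y0} \<longleftrightarrow> y \<in> (\<lambda>y. y + y0) ` {y. f y = 0}"
      by (simp add: f_diff)
  qed
  then show ?thesis
    by (simp add: card_image)
qed

lemma card_UNIV_eq_card_range_mult_card_kernel:
  fixes f :: "'a::{ab_group_add,finite} \<Rightarrow> 'b::ab_group_add"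
  assumes add: "\<And>x y. f (x + y) = f x + f y"
  shows "card (UNIV :: 'a set) = card (range f) * card {y. f y = 0}"
proof -
  have "card (UNIV :: 'a set) = (\<Sum>s\<in>range f. card {y. f y = s})"
    using sum.group[of "UNIV :: 'a set" "range f" f "\<lambda>_. 1::nat"] by simp
  also have "\<dots> = (\<Sum>s\<in>range f. card {y. f y = 0})"
    using card_fibre_additive[OF add] by (intro sum.cong) auto
  finally show ?thesis
    by simp
qed

definition is_subfield :: "'a::field set \<Rightarrow> bool" where
  "is_subfield K \<longleftrightarrow> 0 \<in> K \<and> 1 \<in> K \<and>
     (\<forall>x\<in>K. \<forall>y\<in>K. x + y \<in> K \<and> x * y \<in> K \<and> -x \<in> K \<and> inverse x \<in> K)"

definition is_subspace_over :: "'a::field set \<Rightarrow> 'a set \<Rightarrow> bool" where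
  "is_subspace_over K S \<longleftrightarrow> 0 \<in> S \<and> (\<forall>x\<in>S. \<forall>y\<in>S. x + y \<in> S) \<and> (\<forall>k\<in>K. \<forall>x\<in>S. k * x \<in> S)"

lemma inj_on_subspace_over_add_line:
  assumes K: "is_subfield K" and A: "is_subspace_over K A" and "r \<notin> A"
  shows "inj_on (\<lambda>(s, k). s + k * r) (A \<times> K)"
proof (rule inj_onI, clarsimp)
  fix s k s' k' assume in_AK: "s \<in> A" "k \<in> K" "s' \<in> A" "k' \<in> K" and eq: "s + k * r = s' + k' * r"
  show "s = s' \<and> k = k'"
  proof (cases "k = k'")
    case False
    then have "r = inverse (k - k') * (s' + (-1) * s)"
      using eq by (simp add: field_simps)
    moreover have "inverse (k - k') \<in> K" "-1 \<in> K"
      using K in_AK unfolding is_subfield_def by (metis diff_conv_add_uminus)+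
    ultimately have "r \<in> A"
      using A in_AK unfolding is_subspace_over_def by metis
    with \<open>r \<notin> A\<close> show ?thesis ..
  qed (use eq in simp)
qed

lemma subspace_over_extend:
  assumes K: "is_subfield K" and A: "is_subspace_over K A" and "r \<notin> A"
  defines "A' \<equiv> (\<lambda>(s, k). s + k * r) ` (A \<times> K)"
  shows "is_subspace_over K A'" and "insert r A \<subseteq> A'" and "card A' = card A * card K"
proof -
  have "inj_on (\<lambda>(s, k). s + k * r) (A \<times> K)"
    using K A \<open>r \<notin> A\<close> by (rule inj_on_subspace_over_add_line)
  then show "card A' = card A * card K"
    unfolding A'_def by (simp add: card_image card_cartesian_product)
  have "0 \<in> K" "1 \<in> K" "\<forall>k\<in>K. \<forall>k'\<in>K. k + k' \<in> K \<and> k * k' \<in> K"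
    and "0 \<in> A" "\<forall>s\<in>A. \<forall>s'\<in>A. s + s' \<in> A" "\<forall>c\<in>K. \<forall>s\<in>A. c * s \<in> A"
    using K A unfolding is_subfield_def is_subspace_over_def by auto
  note closed = this
  have "s \<in> A'" if "s \<in> A" for s
    unfolding A'_def using that closed by (intro rev_image_eqI[of "(s, 0)"]) auto
  moreover have "r \<in> A'"
    unfolding A'_def using closed by (intro rev_image_eqI[of "(0, 1)"]) auto
  ultimately show "insert r A \<subseteq> A'"
    by blast
  have "0 \<in> A'"
    unfolding A'_def using closed by (intro rev_image_eqI[of "(0, 0)"]) auto
  moreover have "x + y \<in> A'" if "x \<in> A'" "y \<in> A'" for x y
  proof -
    obtain s k where "x = s + k * r" "s \<in> A" "k \<in> K"
      using \<open>x \<in> A'\<close> unfolding A'_def by auto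
    moreover obtain s' k' where "y = s' + k' * r" "s' \<in> A" "k' \<in> K"
      using \<open>y \<in> A'\<close> unfolding A'_def by auto
    ultimately show ?thesis
      unfolding A'_def using closed
      by (intro rev_image_eqI[of "(s + s', k + k')"]) (auto simp: algebra_simps)
  qed
  moreover have "c * x \<in> A'" if "c \<in> K" "x \<in> A'" for c x
  proof -
    obtain s k where "x = s + k * r" "s \<in> A" "k \<in> K"
      using \<open>x \<in> A'\<close> unfolding A'_def by auto
    then show ?thesis
      unfolding A'_def using closed \<open>c \<in> K\<close>
      by (intro rev_image_eqI[of "(c * s, c * k)"]) (auto simp: algebra_simps)
  qed
  ultimately show "is_subspace_over K A'"
    unfolding is_subspace_over_def by blast
qed

lemma card_subspace_over:
  assumes K: "is_subfield K" and "finite S" and "is_subspace_over K S"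
  shows "\<exists>j. card S = card K ^ j"
proof -
  have "\<exists>j. card S = card A * card K ^ j" if "is_subspace_over K A" "A \<subseteq> S" for A
    using that
  proof (induction "card S - card A" arbitrary: A rule: less_induct)
    case less
    show ?case
    proof (cases "A = S")
      case False
      then obtain r where r: "r \<in> S" "r \<notin> A"
        using less.prems(2) by blast
      define A' where "A' = (\<lambda>(s, k). s + k * r) ` (A \<times> K)"
      note A' = subspace_over_extend[OF K less.prems(1) \<open>r \<notin> A\<close>, folded A'_def]
      have "A' \<subseteq> S"
        using less.prems \<open>is_subspace_over K S\<close> r K
        unfolding A'_def is_subspace_over_def by auto
      then have "card A < card A'" "card A' \<le> card S"
        using A'(2) r(2) \<open>finite S\<close> by (auto intro!: psubset_card_mono card_mono dest: finite_subset)
      then have "card S - card A' < card S - card A"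
        by linarith
      then obtain j where "card S = card A' * card K ^ j"
        using less.hyps A'(1) \<open>A' \<subseteq> S\<close> by blast
      then show ?thesis
        using A'(3) by (metis mult.assoc power_Suc)
    qed (auto intro: exI[of _ 0])
  qed
  moreover have "is_subspace_over K {0}" "{0} \<subseteq> S"
    using K \<open>is_subspace_over K S\<close> unfolding is_subfield_def is_subspace_over_def by auto
  ultimately show ?thesis
    by fastforce
qed

lemma card_roots_trinomial_le:
  fixes a b c :: "'a::idom"
  assumes "a \<noteq> 0" "n0 < n1" "n1 < n2"
  shows "card {x. a * x^n2 + b * x^n1 + c * x^n0 = 0} \<le> n2"
proof -
  define p where "p = monom a n2 + monom b n1 + monom c n0"
  have "coeff p n2 = a"
    unfolding p_def using assms by simp
  then have "p \<noteq> 0"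
    using assms by auto
  moreover have "degree p \<le> n2"
    unfolding p_def using assms by (intro degree_add_le degree_monom_le[THEN order.trans]) auto
  ultimately show ?thesis
    using card_poly_roots_bound[of p] by (simp add: p_def poly_monom)
qed

lemma power_3_odd_mod_4:
  assumes "odd h"
  shows "(3::nat)^h mod 4 = 3"
proof -
  obtain l where "h = 2*l + 1"
    using assms by (elim oddE)
  then have "(3::nat)^h mod 4 = (3 * 9^l) mod 4"
    by (simp add: power_add power_mult)
  also have "\<dots> = (3 * (9^l mod 4)) mod 4"
    by (rule mod_mult_right_eq[symmetric])
  also have "(9::nat)^l mod 4 = 1"
    using power_mod[of "9::nat" 4 l] by simp
  finally show ?thesis
    by simp
qed

lemma polar_det_plus_minus_identity:
  fixes x y z :: "'a::comm_ring_1"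
  shows "(1 + 1)^3 - (1 + 1) * ((1 + x)^2 + (1 + y)^2 + (1 + z)^2) + 2 * (1 + x) * (1 + y) * (1 + z)
       + ((1 + 1)^3 - (1 + 1) * ((1 - x)^2 + (1 - y)^2 + (1 - z)^2) + 2 * (1 - x) * (1 - y) * (1 - z))
       = - ((x + y + z)^2 + 1) + 3 * (3 - (x^2 + y^2 + z^2) + 2 * (x*y + y*z + x*z))"
  by (simp add: algebra_simps power2_eq_square power3_eq_cube)

locale gf_3_pow_3h =
  fixes h m e :: nat and field_type :: "'a::{field,finite} itself"
  assumes odd_h: "odd h" and m_def: "m = 3*h" and e_def: "e = 3^h"
    and card_field: "card (UNIV :: 'a set) = 3^m"
begin

lemma m_pos: "m > 0"
  using odd_h m_def by (cases h) auto

lemma CHAR_eq_3: "CHAR('a) = 3"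
  using CHAR_eq_prime_of_card[OF _ card_field] by simp

lemma three_eq_0: "(3::'a) = 0"
  using of_nat_CHAR[where 'a = 'a] unfolding CHAR_eq_3 by simp

lemma two_eq_minus_1: "(2::'a) = -1"
  using three_eq_0 eq_neg_iff_add_eq_0[of "2::'a" 1] by simp

lemma one_neq_minus_1: "(1::'a) \<noteq> -1"
proof
  assume "(1::'a) = -1"
  then have "(2::'a) = 0"
    by (simp add: eq_neg_iff_add_eq_0)
  then show False
    using two_eq_minus_1 by simp
qed

lemma add_self_eq_0_iff: "(x::'a) + x = 0 \<longleftrightarrow> x = 0"
proof -
  have "x + x = 2 * x"
    by simp
  also have "\<dots> = - x"
    using two_eq_minus_1 by simp
  finally show ?thesis
    by (simp only: neg_equal_0_iff_equal)
qed

lemma power_3_pow_add: "((x::'a) + y) ^ (3^n) = x^(3^n) + y^(3^n)"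
  by (rule freshmans_dream') (simp_all add: CHAR_eq_3)

lemma power_card: "(x::'a) ^ (3^m) = x"
  using finite_field_power_card[of x] card_field by simp

abbreviation Tr :: "'a \<Rightarrow> 'a" where
  "Tr \<equiv> abs_trace3 m"

lemma Tr_add: "Tr (x + y) = Tr x + Tr y"
  unfolding abs_trace3_def by (simp add: power_3_pow_add sum.distrib)

lemma Tr_0: "Tr 0 = 0"
  unfolding abs_trace3_def by (simp add: power_0_left)

lemma Tr_minus: "Tr (- x) = - Tr x"
proof -
  have "Tr x + Tr (- x) = 0"
    using Tr_add[of x "-x"] Tr_0 by simp
  then show ?thesis
    by (simp add: add.inverse_unique)
qed

lemma Tr_diff: "Tr (x - y) = Tr x - Tr y"
  using Tr_add[of x "-y"] Tr_minus[of y] by simp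

lemma Tr_power_3: "Tr (x^3) = Tr x"
proof -
  obtain n where n: "m = Suc n"
    using m_pos by (cases m) auto
  have "Tr (x^3) = (\<Sum>i<m. x^(3^Suc i))"
    unfolding abs_trace3_def by (simp add: power_mult[symmetric] mult.commute)
  also have "\<dots> = (\<Sum>i<n. x^(3^Suc i)) + x^(3^m)"
    unfolding n by (rule sum.lessThan_Suc)
  also have "x^(3^m) = x"
    by (rule power_card)
  also have "(\<Sum>i<n. x^(3^Suc i)) + x = Tr x"
    unfolding abs_trace3_def n sum.lessThan_Suc_shift by (simp add: add.commute)
  finally show ?thesis .
qed

lemma Tr_power_3_pow: "Tr (x^(3^n)) = Tr x"
proof (induction n)
  case (Suc n)
  have "x^(3^Suc n) = (x^(3^n))^3"
    by (simp add: power_mult[symmetric] mult.commute)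
  then show ?case
    using Tr_power_3 Suc by simp
qed simp

definition F3 :: "'a set" where
  "F3 = {0, 1, -1}"

lemma card_F3: "card F3 = 3"
  unfolding F3_def using one_neq_minus_1 by simp

lemma sum_F3: "(\<Sum>s\<in>F3. g s) = g 0 + g 1 + g (-1)"
  unfolding F3_def using one_neq_minus_1 by (simp add: add.assoc)

lemma Tr_in_F3: "Tr x \<in> F3"
proof -
  have "(Tr x)^3 = (\<Sum>i<m. (x^(3^i))^3)"
    unfolding abs_trace3_def
    by (rule freshmans_dream_sum) (simp_all add: CHAR_eq_3)
  also have "\<dots> = Tr (x^3)"
    unfolding abs_trace3_def by (simp add: power_mult[symmetric] mult.commute)
  finally have "Tr x * (Tr x - 1) * (Tr x + 1) = 0"
    using Tr_power_3 by (simp add: algebra_simps power3_eq_cube)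
  then show ?thesis
    unfolding F3_def by (auto simp: eq_neg_iff_add_eq_0)
qed

lemma Tr_not_zero: "\<exists>x. Tr x \<noteq> 0"
proof -
  define p :: "'a poly" where "p = (\<Sum>i<m. monom 1 (3^i))"
  have "coeff p (3^(m-1)) = (\<Sum>i<m. if 3^i = (3::nat)^(m-1) then 1 else 0)"
    unfolding p_def by (simp add: coeff_sum)
  also have "\<dots> = (\<Sum>i\<in>{m-1}. 1)"
    by (rule sum.mono_neutral_cong_right) (use m_pos in auto)
  finally have "p \<noteq> 0"
    by auto
  moreover have "degree p \<le> 3^(m-1)"
    unfolding p_def
    by (rule degree_sum_le) (auto intro: order.trans[OF degree_monom_le] simp: power_increasing)
  moreover have "Tr x = poly p x" for x
    unfolding p_def abs_trace3_def by (simp add: poly_sum poly_monom)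
  ultimately have "card {x. Tr x = 0} \<le> 3^(m-1)"
    using card_poly_roots_bound[of p] by simp
  also have "\<dots> < card (UNIV :: 'a set)"
    using m_pos card_field by simp
  finally have "{x. Tr x = 0} \<noteq> UNIV"
    by auto
  then show ?thesis
    by auto
qed

lemma card_Tr_fibre:
  assumes "c \<noteq> 0" and "s \<in> F3"
  shows "card {y. Tr (c*y) = s} = 3^(m-1)"
proof -
  define f where "f y = Tr (c*y)" for y
  have add: "f (x + y) = f x + f y" for x y
    unfolding f_def by (simp add: distrib_left Tr_add)
  obtain x where "Tr x \<noteq> 0"
    using Tr_not_zero by blast
  then have F3_eq: "F3 = {0, Tr x, - Tr x}"
    using Tr_in_F3[of x] unfolding F3_def by auto
  have "f 0 = 0" "f (x/c) = Tr x" "f (-(x/c)) = - Tr x"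
    unfolding f_def using \<open>c \<noteq> 0\<close> by (simp_all add: Tr_minus Tr_0)
  then have "0 \<in> range f" "Tr x \<in> range f" "- Tr x \<in> range f"
    by (metis rangeI)+
  then have "F3 \<subseteq> range f"
    unfolding F3_eq by blast
  moreover have "range f \<subseteq> F3"
    unfolding f_def using Tr_in_F3 by auto
  ultimately have range_f: "range f = F3"
    by blast
  have "3^m = 3 * card {y. f y = 0}"
    using card_UNIV_eq_card_range_mult_card_kernel[OF add] unfolding range_f card_F3 card_field .
  then have "card {y. f y = 0} = 3^(m-1)"
    using m_pos by (cases m) auto
  moreover obtain y0 where "s = f y0"
    using range_f \<open>s \<in> F3\<close> by auto
  ultimately show ?thesis
    using card_fibre_additive[OF add, of y0] unfolding f_def by simp
qed

lemma e_cube: "e*e*e = 3^m"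
  using power_mult[of "3::nat" h 3] unfolding e_def m_def by (simp add: power3_eq_cube mult.commute)

lemma e_ge_3: "e \<ge> 3"
  using odd_h unfolding e_def by (cases h) auto

lemma odd_e: "odd e"
  unfolding e_def by simp

lemma power_e_add: "((x::'a) + y)^e = x^e + y^e"
  unfolding e_def by (rule power_3_pow_add)

lemma power_ee_add: "((x::'a) + y)^(e*e) = x^(e*e) + y^(e*e)"
  unfolding e_def by (simp only: power_add[symmetric] power_3_pow_add)

lemma power_e_minus: "(- (x::'a))^e = - (x^e)"
  using odd_e by (simp add: power_minus_odd)

lemma power_ee_minus: "(- (x::'a))^(e*e) = - (x^(e*e))"
  using odd_e by (simp add: power_minus_odd)

lemma power_e_cycle [simp]:
  "((x::'a)^e)^e = x^(e*e)" "(x^(e*e))^e = x" "(x^e)^(e*e) = x" "(x^(e*e))^(e*e) = x^e"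
proof -
  have eee: "x^(e*e*e) = x" for x :: 'a
    unfolding e_cube by (rule power_card)
  show "(x^e)^e = x^(e*e)" "(x^(e*e))^e = x" "(x^e)^(e*e) = x"
    using eee by (simp_all add: power_mult[symmetric] ac_simps)
  show "(x^(e*e))^(e*e) = x^e"
    using eee[of "x^e"] by (simp add: power_mult[symmetric] ac_simps)
qed

lemma Tr_power_e: "Tr (x^e) = Tr x"
  unfolding e_def by (rule Tr_power_3_pow)

lemma Tr_power_ee: "Tr (x^(e*e)) = Tr x"
  using Tr_power_e[of "x^e"] Tr_power_e[of x] by simp

lemma is_subfield_fixed: "is_subfield {x::'a. x^e = x}"
  unfolding is_subfield_def
  using e_ge_3 by (auto simp: power_e_add power_e_minus power_mult_distrib power_inverse)

lemma card_fixed_field: "card {x::'a. x^e = x} = e"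
proof -
  define T where "T x = x + x^e + x^(e*e)" for x :: 'a
  have T_add: "T (x + y) = T x + T y" for x y
    unfolding T_def by (simp add: power_e_add power_ee_add ac_simps)
  have range_T: "range T \<subseteq> {x. x^e = x}"
    unfolding T_def by (auto simp: power_e_add ac_simps)
  have kernel_T: "card {x. T x = 0} \<le> e*e"
    using card_roots_trinomial_le[of "1::'a" 1 e "e*e" 1 1] e_ge_3 unfolding T_def
    by (simp add: ac_simps)
  have "card (range T) * card {x. T x = 0} \<le> card {x::'a. x^e = x} * (e*e)"
    using range_T kernel_T by (intro mult_le_mono card_mono) simp_all
  then have "e*e*e \<le> card {x::'a. x^e = x} * (e*e)"
    using card_UNIV_eq_card_range_mult_card_kernel[OF T_add] card_field e_cube by simp
  then have "e \<le> card {x::'a. x^e = x}"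
    using e_ge_3 by (simp add: mult.assoc)
  moreover have "card {x::'a. x^e = x} \<le> e"
    using card_roots_trinomial_le[of "1::'a" 0 1 e "-1" 0] e_ge_3 by simp
  ultimately show ?thesis
    by simp
qed

definition qform :: "'a \<Rightarrow> 'a \<Rightarrow> 'a \<Rightarrow> 'a" where
  "qform a u y = Tr (a * y^(e+1) + u * y^2)"

text \<open>Under the trace form the adjoint of \<open>y \<mapsto> y^e\<close> is \<open>z \<mapsto> z^(e*e)\<close>, which produces
  the middle term of the polar map.\<close>

definition polar_map :: "'a \<Rightarrow> 'a \<Rightarrow> 'a \<Rightarrow> 'a" where
  "polar_map a u x = a * x^e + a^(e*e) * x^(e*e) + (u + u) * x"

definition radical :: "'a \<Rightarrow> 'a \<Rightarrow> 'a set" where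
  "radical a u = {z. polar_map a u z = 0}"

lemma Tr_mult_power_e: "Tr (a * y * z^e) = Tr (a^(e*e) * y^(e*e) * z)"
proof -
  have "Tr (a * y * z^e) = Tr ((a * y * z^e)^(e*e))"
    by (rule Tr_power_ee[symmetric])
  also have "(a * y * z^e)^(e*e) = a^(e*e) * y^(e*e) * z"
    by (simp only: power_mult_distrib power_e_cycle)
  finally show ?thesis .
qed

lemma qform_add: "qform a u (y + z) = qform a u y + qform a u z + Tr (z * polar_map a u y)"
proof -
  have "a * (y+z)^(e+1) + u * (y+z)^2 = (a * y^(e+1) + u * y^2) + (a * z^(e+1) + u * z^2)
      + a * y * z^e + z * (a * y^e + (u + u) * y)"
    by (simp add: power_add power_e_add power2_eq_square algebra_simps)
  then have "qform a u (y + z) = qform a u y + qform a u z + Tr (a * y * z^e) + Tr (z * (a * y^e + (u + u) * y))"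
    unfolding qform_def by (simp only: Tr_add)
  moreover have "Tr (a * y * z^e) + Tr (z * (a * y^e + (u + u) * y)) = Tr (z * polar_map a u y)"
    unfolding Tr_mult_power_e polar_map_def Tr_add[symmetric] by (simp add: algebra_simps)
  ultimately show ?thesis
    by (simp add: add.assoc)
qed

lemma Tr_mult_polar_map_commute: "Tr (z * polar_map a u y) = Tr (y * polar_map a u z)"
  using qform_add[of a u y z] qform_add[of a u z y] by (simp add: ac_simps)

lemma qform_minus: "qform a u (- y) = qform a u y"
  unfolding qform_def using odd_e by simp

lemma qform_in_F3: "qform a u y \<in> F3"
  unfolding qform_def by (rule Tr_in_F3)

lemma qform_eq_0_if_polar_map_eq_0:
  assumes "polar_map a u z = 0"
  shows "qform a u z = 0"
proof -
  have "qform a u (z + z) = qform a u z + qform a u z"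
    using qform_add[of a u z z] assms Tr_0 by simp
  moreover have "z + z = - z"
    using two_eq_minus_1 by (metis mult_2 mult_minus1)
  ultimately have "qform a u z + qform a u z = qform a u z"
    using qform_minus by simp
  then show ?thesis
    by (metis add_cancel_right_right)
qed

lemma card_qform_shift_eq:
  "card {y. qform a u (y + z) = qform a u y} = (if polar_map a u z = 0 then 3^m else 3^(m-1))"
proof -
  have "qform a u (y + z) = qform a u y \<longleftrightarrow> Tr (polar_map a u z * y) = - qform a u z" for y
  proof -
    have "qform a u (y + z) = qform a u y + (qform a u z + Tr (polar_map a u z * y))"
      using qform_add[of a u y z] Tr_mult_polar_map_commute[of z a u y] by (simp add: ac_simps)
    then show ?thesis
      by (auto simp: eq_neg_iff_add_eq_0 ac_simps)
  qed
  moreover have "- qform a u z \<in> F3"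
    using qform_in_F3[of a u z] unfolding F3_def by auto
  ultimately show ?thesis
    using card_Tr_fibre[of "polar_map a u z"] card_field qform_eq_0_if_polar_map_eq_0 Tr_0
    by (cases "polar_map a u z = 0") simp_all
qed

lemma sum_card_qform_fibres: "(\<Sum>s\<in>F3. card {y. qform a u y = s}) = 3^m"
proof -
  have "qform a u ` UNIV \<subseteq> F3"
    using qform_in_F3 by auto
  from sum.group[OF _ _ this, of "\<lambda>_. 1::nat"] show ?thesis
    using card_field by simp
qed

lemma sum_square_card_qform_fibres:
  "(\<Sum>s\<in>F3. card {y. qform a u y = s}^2)
     = card (radical a u) * 3^m + (3^m - card (radical a u)) * 3^(m-1)"
proof -
  define n where "n s = card {y. qform a u y = s}" for s
  have "(\<Sum>s\<in>F3. n s ^ 2) = (\<Sum>s\<in>F3. \<Sum>y\<in>{y. qform a u y = s}. n (qform a u y))"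
    unfolding n_def by (simp add: power2_eq_square)
  also have "\<dots> = (\<Sum>y\<in>UNIV. n (qform a u y))"
    using sum.group[of UNIV F3 "qform a u" "\<lambda>y. n (qform a u y)"] qform_in_F3 by auto
  also have "\<dots> = (\<Sum>y\<in>UNIV. card {z. qform a u (y + z) = qform a u y})"
  proof (intro sum.cong refl)
    fix y
    have "{x. qform a u x = qform a u y} = (\<lambda>z. y + z) ` {z. qform a u (y + z) = qform a u y}"
      by (auto intro: image_eqI[of _ _ "_ - y"])
    then show "n (qform a u y) = card {z. qform a u (y + z) = qform a u y}"
      unfolding n_def by (simp add: card_image)
  qed
  also have "\<dots> = (\<Sum>z\<in>UNIV. card {y. qform a u (y + z) = qform a u y})"
    using sum.swap[of "\<lambda>y z. of_bool (qform a u (y + z) = qform a u y) :: nat" UNIV UNIV] by simp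
  also have "\<dots> = (\<Sum>z\<in>UNIV. if z \<in> radical a u then 3^m else 3^(m-1))"
    unfolding radical_def card_qform_shift_eq by simp
  also have "\<dots> = card (radical a u) * 3^m + (3^m - card (radical a u)) * 3^(m-1)"
  proof -
    have "card {z. z \<notin> radical a u} = 3^m - card (radical a u)"
      using card_Diff_subset[of "radical a u" UNIV] card_field by (simp add: set_diff_eq)
    then show ?thesis
      by (simp add: sum.If_cases Int_def)
  qed
  finally show ?thesis
    unfolding n_def .
qed

lemma odd_card_qform_zeros: "odd (card {y. qform a u y = 0})"
proof (rule odd_card_of_neg_closed)
  show "0 \<in> {y. qform a u y = 0}"
    by (simp add: qform_def Tr_0)
  show "x = 0" if "x + x = 0" for x :: 'a
    using that add_self_eq_0_iff by blast
qed (simp_all add: qform_minus)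

lemma card_qform_zeros_by_radical:
  assumes "card (radical a u) = e^j"
  defines "n0 \<equiv> card {y. qform a u y = 0}"
  shows "(odd (m + h*j) \<longrightarrow> n0 = 3^(m-1)) \<and>
         (even (m + h*j) \<longrightarrow> n0 = 3^(m-1) + 2*3^((m + h*j) div 2 - 1) \<or> n0 + 2*3^((m + h*j) div 2 - 1) = 3^(m-1))"
  unfolding n0_def
proof (rule zero_count_from_square_sum[OF _ _ odd_card_qform_zeros])
  define r where "r = card (radical a u)"
  define q :: nat where "q = 3^m"
  have "e^j = 3^(h*j)"
    unfolding e_def by (simp add: power_mult)
  then have r: "r = 3^(h*j)"
    unfolding r_def assms(1) .
  have "r \<le> q"
    unfolding r_def q_def card_field[symmetric] by (rule card_mono) simp_all
  then obtain d where d: "q = r + d"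
    using le_Suc_ex by blast
  have "3 * 3^(m-1) = q"
    unfolding q_def using m_pos by (cases m) auto
  then have "3 * (r * q + (q - r) * 3^(m-1)) = q * q + 2 * (q * r)"
    using d by (simp add: algebra_simps)
  also have "\<dots> = 3^(2*m) + 2 * 3^(m + h*j)"
    unfolding q_def r by (simp add: power_add mult_2 power_mult)
  finally show "3 * ((card {y. qform a u y = 0})^2 + (card {y. qform a u y = 1})^2 + (card {y. qform a u y = -1})^2)
      = 3^(2*m) + 2 * 3^(m + h*j)"
    using sum_square_card_qform_fibres[of a u] unfolding sum_F3 r_def q_def by simp
  show "card {y. qform a u y = 0} + card {y. qform a u y = 1} + card {y. qform a u y = -1} = 3^m"
    using sum_card_qform_fibres[of a u] unfolding sum_F3 .
  show "2 \<le> m + h*j" "1 \<le> m"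
    using m_def m_pos by auto
qed

lemma polar_map_add: "polar_map a u (x + y) = polar_map a u x + polar_map a u y"
  unfolding polar_map_def by (simp add: power_e_add power_ee_add algebra_simps)

lemma polar_map_0 [simp]: "polar_map a u 0 = 0"
  unfolding polar_map_def using e_ge_3 by (simp add: power_0_left)

lemma polar_map_scale:
  assumes "k^e = k"
  shows "polar_map a u (k * x) = k * polar_map a u x"
proof -
  have "k^(e*e) = k"
    using assms power_e_cycle(1)[of k] by simp
  then show ?thesis
    unfolding polar_map_def using assms by (simp add: algebra_simps)
qed

lemma card_radical_eq_power: "\<exists>j. card (radical a u) = e^j"
proof -
  have "is_subspace_over {x. x^e = x} (radical a u)"
    unfolding is_subspace_over_def radical_def by (simp add: polar_map_add polar_map_scale)
  then show ?thesis
    using card_subspace_over[OF is_subfield_fixed] card_fixed_field by simp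
qed

lemma card_radical_le:
  assumes "a \<noteq> 0"
  shows "card (radical a u) \<le> e*e"
proof -
  have "radical a u = {x. a^(e*e) * x^(e*e) + a * x^e + (u + u) * x^1 = 0}"
    unfolding radical_def polar_map_def by (simp add: ac_simps)
  then show ?thesis
    using card_roots_trinomial_le[of "a^(e*e)" 1 e "e*e"] assms e_ge_3 by simp
qed

text \<open>For \<open>x\<close> in the radical, \<open>x\<close>, \<open>x^e\<close> and \<open>x^(e*e)\<close> solve a homogeneous linear
  system (the polar equation and its two Frobenius conjugates); this is its determinant.\<close>

definition polar_det :: "'a \<Rightarrow> 'a \<Rightarrow> 'a" where
  "polar_det a c = c^3 - c * (a^2 + (a^e)^2 + (a^(e*e))^2) + 2 * a * a^e * a^(e*e)"

lemma polar_conjugate_equations: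
  fixes a c x :: 'a
  assumes "c^e = c" and E0: "c * x + a * x^e + a^(e*e) * x^(e*e) = 0"
  shows "a * x + c * x^e + a^e * x^(e*e) = 0" and "a^(e*e) * x + a^e * x^e + c * x^(e*e) = 0"
proof -
  have "c^(e*e) = c"
    using assms(1) power_e_cycle(1)[of c] by simp
  moreover have "(c * x + a * x^e + a^(e*e) * x^(e*e))^e = 0"
    "(c * x + a * x^e + a^(e*e) * x^(e*e))^(e*e) = 0"
    using E0 e_ge_3 by simp_all
  ultimately show "a * x + c * x^e + a^e * x^(e*e) = 0" "a^(e*e) * x + a^e * x^e + c * x^(e*e) = 0"
    using assms(1) by (simp_all add: power_e_add power_ee_add power_mult_distrib ac_simps)
qed

lemma polar_det_eq_0:
  assumes "u^e = u" and "x \<noteq> 0" and "x \<in> radical a u"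
  shows "polar_det a (u + u) = 0"
proof -
  define c where "c = u + u"
  have c_fixed: "c^e = c"
    unfolding c_def by (simp only: power_e_add assms(1))
  have E0: "c * x + a * x^e + a^(e*e) * x^(e*e) = 0"
    using assms(3) unfolding radical_def polar_map_def c_def by (simp add: ac_simps)
  note E12 = polar_conjugate_equations[OF c_fixed E0]
  define b g x1 x2 where "b = a^e" and "g = a^(e*e)" and "x1 = x^e" and "x2 = x^(e*e)"
  have "polar_det a c * x = (c*c - b*b) * (c * x + a * x1 + g * x2) - (a*c - b*g) * (a * x + c * x1 + b * x2)
      + (a*b - c*g) * (g * x + b * x1 + c * x2)"
    unfolding polar_det_def b_def g_def x1_def x2_def
    by (simp add: algebra_simps power2_eq_square power3_eq_cube)
  also have "\<dots> = 0"
    using E0 E12 unfolding b_def g_def x1_def x2_def by simp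
  finally show ?thesis
    using assms(2) unfolding c_def by simp
qed

lemma radical_eq_0_if_polar_det_neq_0:
  assumes "u^e = u" and "polar_det a (u + u) \<noteq> 0"
  shows "radical a u = {0}"
  using polar_det_eq_0[OF assms(1)] assms(2) by (auto simp: radical_def)

lemma card_qform_zeros_nondegenerate:
  assumes "u^e = u" and "polar_det a (u + u) \<noteq> 0"
  shows "card {y. qform a u y = 0} = 3^(m-1)"
proof -
  have "card (radical a u) = e^0"
    using radical_eq_0_if_polar_det_neq_0[OF assms] by simp
  moreover have "odd (m + h*0)"
    using odd_h m_def by simp
  ultimately show ?thesis
    using card_qform_zeros_by_radical by blast
qed

lemma card_qform_zeros:
  assumes "u^e = u" and "a \<noteq> 0 \<or> u \<noteq> 0"
  shows "card {y. qform a u y = 0} \<in> {3^(m-1), 3^(m-1) + 2*3^(2*h-1), 3^(m-1) - 2*3^(2*h-1)}"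
proof (cases "a = 0")
  case True
  then have "polar_det a (u + u) = (u + u)^3"
    unfolding polar_det_def using e_ge_3 by (simp add: power_0_left)
  also have "\<dots> \<noteq> 0"
    using True assms(2) add_self_eq_0_iff by (metis power_not_zero)
  finally show ?thesis
    using card_qform_zeros_nondegenerate[OF assms(1)] by simp
next
  case False
  obtain j where j: "card (radical a u) = e^j"
    using card_radical_eq_power by blast
  then have "e^j \<le> e^2"
    using card_radical_le[OF False, of u] by (simp add: power2_eq_square)
  then have "j \<le> 2"
    using e_ge_3 by (simp add: power_le_imp_le_exp)
  then consider "j = 0 \<or> j = 2" | "j = 1"
    by linarith
  then show ?thesis
  proof cases
    case 1
    then have "odd (m + h*j)"
      using odd_h m_def by auto
    then show ?thesis
      using card_qform_zeros_by_radical[OF j] by simp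
  next
    case 2
    then have "even (m + h*j)" "(m + h*j) div 2 - 1 = 2*h - 1"
      using odd_h m_def by auto
    then show ?thesis
      using card_qform_zeros_by_radical[OF j] by auto
  qed
qed

lemma fixed_square_neq_minus_1:
  fixes t :: 'a
  assumes "t^e = t"
  shows "t^2 \<noteq> -1"
proof
  assume t2: "t^2 = -1"
  have "e mod 4 = 3"
    using power_3_odd_mod_4[OF odd_h] unfolding e_def .
  then have "e = 2 * (2 * (e div 4) + 1) + 1"
    by presburger
  then obtain k where "e = 2 * (2 * k + 1) + 1"
    by blast
  moreover have "(t^2)^(2 * k + 1) * t = t^(2 * (2 * k + 1) + 1)"
    by (metis power_mult power_add power_one_right)
  ultimately have "t^e = (t^2)^(2 * k + 1) * t"
    by (simp only:)
  also have "\<dots> = - t"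
    unfolding t2 by simp
  finally have "t = 0"
    using assms add_self_eq_0_iff[of t] by (simp add: eq_neg_iff_add_eq_0)
  then show False
    using t2 by simp
qed

lemma polar_det_1_1: "polar_det 1 (1 + 1) \<noteq> 0"
proof -
  have "polar_det 1 (1 + 1) = 1 + 3"
    unfolding polar_det_def by (simp add: power3_eq_cube)
  then show ?thesis
    using three_eq_0 by simp
qed

lemma polar_det_0:
  assumes "b \<noteq> 0"
  shows "polar_det b (0 + 0) \<noteq> 0"
proof -
  have "polar_det b (0 + 0) = 2 * b * b^e * b^(e*e)"
    unfolding polar_det_def by (simp add: power_0_left)
  then show ?thesis
    using assms two_eq_minus_1 by simp
qed

lemma polar_det_plus_minus:
  "polar_det (1 + b) (1 + 1) + polar_det (1 - b) (1 + 1) = - ((b + b^e + b^(e*e))^2 + 1)"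
proof -
  define y z where "y = b^e" and "z = b^(e*e)"
  have "(1 + b)^e = 1 + y" "(1 + b)^(e*e) = 1 + z" "(1 - b)^e = 1 - y" "(1 - b)^(e*e) = 1 - z"
    unfolding y_def z_def
    using power_e_add[of 1 "-b"] power_ee_add[of 1 "-b"] power_e_minus[of b] power_ee_minus[of b]
    by (simp_all add: power_e_add power_ee_add)
  then have "polar_det (1 + b) (1 + 1) + polar_det (1 - b) (1 + 1)
      = - ((b + y + z)^2 + 1) + 3 * (3 - (b^2 + y^2 + z^2) + 2 * (b*y + y*z + b*z))"
    unfolding polar_det_def by (simp only: polar_det_plus_minus_identity)
  then show ?thesis
    using three_eq_0 unfolding y_def z_def by simp
qed

lemma polar_det_plus_or_minus_neq_0:
  "polar_det (1 + b) (1 + 1) \<noteq> 0 \<or> polar_det (1 - b) (1 + 1) \<noteq> 0"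
proof -
  have "(b + b^e + b^(e*e))^e = b + b^e + b^(e*e)"
    by (simp add: power_e_add ac_simps)
  then have "(b + b^e + b^(e*e))^2 + 1 \<noteq> 0"
    using fixed_square_neq_minus_1 by (simp add: add_eq_0_iff2)
  then show ?thesis
    using polar_det_plus_minus[of b] by (metis add.right_neutral neg_equal_0_iff_equal)
qed

lemma F3_pencil_zero_count:
  assumes "s \<in> F3" "t \<in> F3"
  shows "of_bool (t = 0) + of_bool (s = 0) + of_bool (s + t = 0) + of_bool (s - t = 0)
         = (1::nat) + 3 * of_bool (s = 0 \<and> t = 0)"
proof -
  have "(2::'a) \<noteq> 0" "(-2::'a) = 1" "(1::'a) \<noteq> -1"
    using two_eq_minus_1 one_neq_minus_1 by simp_all
  then show ?thesis
    using assms unfolding F3_def by auto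
qed

lemma sum_card_zeros_pencil:
  "card {y. qform b 0 y = 0} + card {y. qform 1 1 y = 0} + card {y. qform (1 + b) 1 y = 0}
     + card {y. qform (1 - b) 1 y = 0} = 3^m + 3 * card {y. qform 1 1 y = 0 \<and> qform b 0 y = 0}"
proof -
  have "qform (1 + b) 1 y = qform 1 1 y + qform b 0 y" "qform (1 - b) 1 y = qform 1 1 y - qform b 0 y" for y
    unfolding qform_def by (simp_all add: Tr_add[symmetric] Tr_diff[symmetric] algebra_simps)
  then have "card {y. qform b 0 y = 0} + card {y. qform 1 1 y = 0} + card {y. qform (1 + b) 1 y = 0}
      + card {y. qform (1 - b) 1 y = 0}
      = (\<Sum>y\<in>UNIV. of_bool (qform b 0 y = 0) + of_bool (qform 1 1 y = 0)
          + of_bool (qform 1 1 y + qform b 0 y = 0) + of_bool (qform 1 1 y - qform b 0 y = 0))"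
    by (simp add: sum.distrib)
  also have "\<dots> = (\<Sum>y\<in>UNIV. 1 + 3 * of_bool (qform 1 1 y = 0 \<and> qform b 0 y = 0))"
    using F3_pencil_zero_count qform_in_F3 by (intro sum.cong) simp_all
  also have "\<dots> = 3^m + 3 * card {y. qform 1 1 y = 0 \<and> qform b 0 y = 0}"
    by (simp add: sum_Suc card_field sum_distrib_left[symmetric])
  finally show ?thesis .
qed

lemma card_common_zeros:
  assumes "b \<noteq> 0"
  shows "card {y. qform 1 1 y = 0 \<and> qform b 0 y = 0}
           \<in> {3^(m-2), 3^(m-2) + 2*3^(2*(h-1)), 3^(m-2) - 2*3^(2*(h-1))}"
proof -
  define N where "N = card {y. qform 1 1 y = 0 \<and> qform b 0 y = 0}"
  define z where "z a u = card {y. qform a u y = 0}" for a u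
  define A B :: nat where "A = 3^(m-2)" and "B = 3^(2*(h-1))"
  have m: "Suc (m - 2) = m - 1" "Suc (m - 1) = m" and h: "Suc (2*(h-1)) = 2*h - 1"
    using odd_h m_def by (cases h; simp)+
  have A: "3^(m-1) = 3*A" and B: "3^(2*h-1) = 3*B"
    unfolding A_def B_def using m(1) h by (metis power_Suc)+
  have "(3::nat)^m = 3 * 3^(m-1)"
    using m(2) by (metis power_Suc)
  then have sum: "z b 0 + z 1 1 + z (1 + b) 1 + z (1 - b) 1 = 9*A + 3*N"
    using sum_card_zeros_pencil[of b] unfolding z_def N_def A by simp
  have "z b 0 = 3*A"
    using card_qform_zeros_nondegenerate[of 0 b] polar_det_0[OF assms] e_ge_3
    unfolding z_def A by (simp add: power_0_left)
  moreover have "z 1 1 = 3*A"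
    using card_qform_zeros_nondegenerate[of 1 1] polar_det_1_1 unfolding z_def A by simp
  moreover have "z (1 + b) 1 \<in> {3*A, 3*A + 6*B, 3*A - 6*B}" "z (1 - b) 1 \<in> {3*A, 3*A + 6*B, 3*A - 6*B}"
    using card_qform_zeros[of 1] unfolding z_def A B by simp_all
  moreover have "z (1 + b) 1 = 3*A \<or> z (1 - b) 1 = 3*A"
    using card_qform_zeros_nondegenerate[of 1] polar_det_plus_or_minus_neq_0[of b] unfolding z_def A by auto
  ultimately have "3*N \<in> {3*A, 3*A + 6*B, 3*A - 6*B}"
    using sum by auto
  then have "N \<in> {A, A + 2*B, A - 2*B}"
    by auto
  then show ?thesis
    unfolding N_def A_def B_def .
qed

end

theorem mainTheorem14:
  fixes h m e :: nat and b :: "'a::{field,finite}"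
  assumes "odd h" and "h > 0"
    and "m = 3 * h" and "e = 3 ^ h"
    and "card (UNIV :: 'a set) = 3 ^ m"
    and "b \<noteq> 0"
  shows "card {y :: 'a. abs_trace3 m (y ^ (e + 1) + y ^ 2) = 0 \<and> abs_trace3 m (b * y ^ (e + 1)) = 0}
           \<in> {3 ^ (m - 2), 3 ^ (m - 2) + 2 * 3 ^ (2 * (h - 1)), 3 ^ (m - 2) - 2 * 3 ^ (2 * (h - 1))}"
proof -
  interpret gf_3_pow_3h h m e "TYPE('a)"
    using assms by unfold_locales auto
  have "abs_trace3 m (y ^ (e + 1) + y ^ 2) = qform 1 1 y" "abs_trace3 m (b * y ^ (e + 1)) = qform b 0 y" for y
    unfolding qform_def by simp_all
  then show ?thesis
    using card_common_zeros[OF assms(6)] by simp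
qed

end
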